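(* For all $\lambda\in[0,1]$ and $\Delta_1,\Delta_2\in[0,\frac12]$, $C_{\mathrm{SKL}}((\mathrm{BSC}_{\Delta_1}\times\mathrm{BSC}_{\Delta_2})\circ B_{3,\lambda})\le\lambda^2\big(C_{\mathrm{SKL}}(\mathrm{BSC}_{\Delta_1})+C_{\mathrm{SKL}}(\mathrm{BSC}_{\Delta_2})\big)$, and the inequality is strict when $0<\lambda<1$ and $\min\{\Delta_1,\Delta_2\}<\frac12$.
   Context: $\mathrm{BSC}_\Delta:\{\pm\}\to\{\pm\}$ flips the input with probability $\Delta$. $B_{3,\lambda}:\{\pm\}\to\{\pm\}^2$ is the kernel $B_{3,\lambda}(x_1,x_2|y)=\lambda+\frac14(1-\lambda)$ if $x_1=x_2=y$ and $\frac14(1-\lambda)$ otherwise. $\times$ is the tensor product of channels. For a binary-input channel $P$, $C_{\mathrm{SKL}}(P)$ is the SKL information ($f$-information with $f(x)=(x-1)\log x$) between $X\sim\mathrm{Unif}(\{\pm\})$ and the output of $P$; in particular $C_{\mathrm{SKL}}(\mathrm{BSC}_\Delta)=\theta\,\mathrm{arctanh}\,\theta$ with $\theta=1-2\Delta$ (with value $+\infty$ at $\Delta=0$). *)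

theory Defs
  imports Complex_Main "HOL-Library.Extended_Real"
begin

text \<open>Binary alphabet {+,-} is encoded as bool (True = +, False = -).
  A channel from 'a to 'b is a Markov kernel W :: 'a \<Rightarrow> 'b \<Rightarrow> real,
  W x y = probability of output y given input x.\<close>

definition BSC :: "real \<Rightarrow> bool \<Rightarrow> bool \<Rightarrow> real" where
  "BSC \<Delta> y x = (if x = y then 1 - \<Delta> else \<Delta>)"

definition B3 :: "real \<Rightarrow> bool \<Rightarrow> bool \<times> bool \<Rightarrow> real" where
  "B3 lam y x = (if fst x = y \<and> snd x = y then lam + (1 - lam) / 4 else (1 - lam) / 4)"

definition chan_prod :: "('a \<Rightarrow> 'b \<Rightarrow> real) \<Rightarrow> ('c \<Rightarrow> 'd \<Rightarrow> real) \<Rightarrow> 'a \<times> 'c \<Rightarrow> 'b \<times> 'd \<Rightarrow> real" where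
  "chan_prod P Q x y = P (fst x) (fst y) * Q (snd x) (snd y)"

text \<open>Composition K \<circ> B: first apply B, then K.\<close>
definition chan_comp :: "('b::finite \<Rightarrow> 'c \<Rightarrow> real) \<Rightarrow> ('a \<Rightarrow> 'b \<Rightarrow> real) \<Rightarrow> 'a \<Rightarrow> 'c \<Rightarrow> real" where
  "chan_comp K B x z = (\<Sum>w\<in>UNIV. B x w * K w z)"

text \<open>Summand Q * f(P/Q) of an f-divergence with f(t) = (t-1) log t, using the
  conventions f(0) = +\<infinity> and 0 * f(p/0) = 0 when p = 0 (here Q = 0 forces P = 0).\<close>
definition skl_term :: "real \<Rightarrow> real \<Rightarrow> ereal" where
  "skl_term p q = (if q = 0 then 0 else if p = 0 then \<infinity> else ereal ((p - q) * ln (p / q)))"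

text \<open>SKL information between X ~ Unif({+,-}) and the output of P:
  D_SKL(P_{XY} || P_X \<otimes> P_Y).\<close>
definition C_SKL :: "(bool \<Rightarrow> 'b::finite \<Rightarrow> real) \<Rightarrow> ereal" where
  "C_SKL P = (\<Sum>x\<in>UNIV. \<Sum>y\<in>UNIV.
      skl_term (P x y / 2) ((1/2) * (\<Sum>x'\<in>UNIV. P x' y / 2)))"

end

theory Submission
  imports Defs
begin

text \<open>
  Write \<open>mix l x = 1 - l + l x\<close>. The composed channel has transition probabilities
  \<open>mix \<lambda> x / 4\<close>, where \<open>x\<close> is the output density of the two BSCs fed with two copies of the input,
  and the SKL information of a binary-input channel is the sum over outputs of
  \<open>(P\<^sub>+ - P\<^sub>-)(ln P\<^sub>+ - ln P\<^sub>-) / 4\<close>. Since \<open>mix \<lambda> x - mix \<lambda> y = \<lambda> (x - y)\<close>, the theorem reduces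
  output by output to \<open>ln (mix \<lambda> x) - ln (mix \<lambda> y) \<le> \<lambda> (ln x - ln y)\<close> for \<open>y \<le> x\<close>.
  The difference \<open>J(\<lambda>)\<close> of the two sides vanishes at \<open>\<lambda> = 0\<close> and \<open>\<lambda> = 1\<close>, it is concave and then
  convex, and \<open>J'(0) = (x - y) - (ln x - ln y)\<close>; hence \<open>J \<le> 0\<close> as soon as the logarithmic mean of
  \<open>x\<close> and \<open>y\<close> is at most 1. For the output pairs of two binary symmetric channels this follows
  from the monotonicity of \<open>\<Delta> \<mapsto> ln ((1 - \<Delta>) / \<Delta>) + 4\<Delta>\<close> on \<open>(0, 1/2]\<close>.
\<close>

lemma mvt_vanishing_ends:
  fixes f f' :: "real \<Rightarrow> real"
  assumes deriv: "\<And>t. 0 \<le> t \<Longrightarrow> t \<le> 1 \<Longrightarrow> (f has_real_derivative f' t) (at t)"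
    and "f 0 = 0" "f 1 = 0" "0 < l" "l < 1"
  obtains s t where "0 < s" "s < l" "f l = l * f' s" "l < t" "t < 1" "f l = - ((1 - l) * f' t)"
proof -
  obtain s where "0 < s" "s < l" "f l - f 0 = (l - 0) * f' s"
    using MVT2[of 0 l f f'] deriv assms(4,5) by auto
  moreover obtain t where "l < t" "t < 1" "f 1 - f l = (1 - l) * f' t"
    using MVT2[of l 1 f f'] deriv assms(4,5) by auto
  ultimately show ?thesis using that assms(2,3) by simp
qed

lemma nonpos_of_two_slopes:
  fixes J a b l :: real
  assumes "J = l * a" "J = - ((1 - l) * b)" "0 < l" "l < 1" "a \<le> b"
  shows "J \<le> 0"
proof -
  have "(1 - l) * J = l * ((1 - l) * a)" using assms(1) by simp
  also have "\<dots> \<le> l * ((1 - l) * b)" using assms(3-5) by (intro mult_left_mono) auto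
  also have "\<dots> = - (l * J)" using assms(2) by simp
  finally show ?thesis by (simp add: algebra_simps)
qed

lemma neg_of_two_slopes:
  fixes J a b l :: real
  assumes "J = l * a" "J = - ((1 - l) * b)" "0 < l" "l < 1" "a < b"
  shows "J < 0"
proof -
  have "(1 - l) * J = l * ((1 - l) * a)" using assms(1) by simp
  also have "\<dots> < l * ((1 - l) * b)" using assms(3-5) by (intro mult_strict_left_mono) auto
  also have "\<dots> = - (l * J)" using assms(2) by simp
  finally show ?thesis by (simp add: algebra_simps)
qed

lemma sum_bool_pair: "(\<Sum>z\<in>UNIV. f z) = f (True, True) + f (True, False) + f (False, True) + f (False, False)"
  by (simp add: UNIV_Times_UNIV[symmetric] sum.cartesian_product[symmetric] UNIV_bool ac_simps)

section \<open>Mixing with the constant 1\<close>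

definition mix :: "real \<Rightarrow> real \<Rightarrow> real" where
  "mix l x = 1 - l + l * x"

definition log_gap :: "real \<Rightarrow> real \<Rightarrow> real" where
  "log_gap x y = (x - y) * (ln x - ln y)"

lemma mix_pos:
  assumes "0 < x" "0 \<le> l" "l \<le> 1"
  shows "0 < mix l x"
  using assms by (cases "l = 1") (auto simp: mix_def intro: add_pos_nonneg)

lemma mix_pos_of_less_one:
  assumes "0 \<le> x" "0 \<le> l" "l < 1"
  shows "0 < mix l x"
  using assms by (simp add: mix_def add_pos_nonneg)

lemma mix_diff: "mix l x - mix l y = l * (x - y)"
  by (simp add: mix_def algebra_simps)

lemma log_gap_commute: "log_gap x y = log_gap y x"
  by (simp add: log_gap_def algebra_simps)

lemma log_gap_scale:
  assumes "0 < c" "0 < x" "0 < y"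
  shows "log_gap (c * x) (c * y) = c * log_gap x y"
  using assms by (simp add: log_gap_def ln_mult algebra_simps)

text \<open>The derivative of \<open>l \<mapsto> (x - 1) / mix l x\<close> is \<open>-(mix_rate x l)\<^sup>2\<close>; \<open>mix_slope_diff\<close> is
  the corresponding difference quotient.\<close>

definition mix_rate :: "real \<Rightarrow> real \<Rightarrow> real" where
  "mix_rate x l = \<bar>x - 1\<bar> / mix l x"

lemma mix_rate_nonneg:
  assumes "0 < x" "0 \<le> l" "l \<le> 1"
  shows "0 \<le> mix_rate x l"
  using mix_pos[OF assms] by (simp add: mix_rate_def)

lemma mix_slope_diff:
  assumes "0 < mix a x" "0 < mix b x"
  shows "(x - 1) / mix b x - (x - 1) / mix a x = - ((b - a) * (mix_rate x a * mix_rate x b))"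
proof -
  have "(x - 1) / mix b x - (x - 1) / mix a x
      = ((x - 1) * mix a x - (x - 1) * mix b x) / (mix a x * mix b x)"
    using assms by (simp add: field_simps)
  also have "(x - 1) * mix a x - (x - 1) * mix b x = - ((b - a) * (\<bar>x - 1\<bar> * \<bar>x - 1\<bar>))"
    by (simp add: mix_def algebra_simps abs_mult_self_eq)
  finally show ?thesis by (simp add: mix_rate_def)
qed

lemma mix_slope_gap_diff:
  assumes "0 < x" "0 < y" "0 \<le> a" "a \<le> 1" "0 \<le> b" "b \<le> 1"
  shows "((x - 1) / mix b x - (y - 1) / mix b y) - ((x - 1) / mix a x - (y - 1) / mix a y)
           = (b - a) * (mix_rate y a * mix_rate y b - mix_rate x a * mix_rate x b)"
proof -
  have "0 < mix a x" "0 < mix b x" "0 < mix a y" "0 < mix b y"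
    using assms by (auto intro: mix_pos)
  then show ?thesis
    using mix_slope_diff[of a x b] mix_slope_diff[of a y b] by (simp add: algebra_simps)
qed

lemma mix_slope_gap_mono:
  assumes "0 < x" "0 < y" "0 \<le> a" "a \<le> b" "b \<le> 1"
    and "mix_rate x a \<le> mix_rate y a" "mix_rate x b \<le> mix_rate y b"
  shows "(x - 1) / mix a x - (y - 1) / mix a y \<le> (x - 1) / mix b x - (y - 1) / mix b y"
proof -
  have "mix_rate x a * mix_rate x b \<le> mix_rate y a * mix_rate y b"
    using assms by (intro mult_mono mix_rate_nonneg) auto
  then have "0 \<le> (b - a) * (mix_rate y a * mix_rate y b - mix_rate x a * mix_rate x b)"
    using \<open>a \<le> b\<close> by simp
  then show ?thesis using mix_slope_gap_diff[of x y a b] assms by simp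
qed

lemma mix_slope_gap_strict_mono:
  assumes "0 < x" "0 < y" "x \<noteq> 1" "0 \<le> a" "a < b" "b \<le> 1"
    and "mix_rate x a \<le> mix_rate y a" "mix_rate x b < mix_rate y b"
  shows "(x - 1) / mix a x - (y - 1) / mix a y < (x - 1) / mix b x - (y - 1) / mix b y"
proof -
  have "0 < mix a x" using assms by (intro mix_pos) auto
  then have "mix_rate x b * mix_rate x a < mix_rate y b * mix_rate y a"
    using assms by (intro mult_less_le_imp_less mix_rate_nonneg) (auto simp: mix_rate_def)
  then have "0 < (b - a) * (mix_rate y a * mix_rate y b - mix_rate x a * mix_rate x b)"
    using \<open>a < b\<close> by (simp add: mult.commute)
  then show ?thesis using mix_slope_gap_diff[of x y a b] assms by simp
qed

lemma mix_rate_le_iff: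
  assumes "0 < mix l x" "0 < mix l y"
  shows "mix_rate x l \<le> mix_rate y l \<longleftrightarrow> \<bar>x - 1\<bar> * mix l y \<le> \<bar>y - 1\<bar> * mix l x"
  using assms by (simp add: mix_rate_def divide_simps)

lemma mix_rate_less_iff:
  assumes "0 < mix l x" "0 < mix l y"
  shows "mix_rate x l < mix_rate y l \<longleftrightarrow> \<bar>x - 1\<bar> * mix l y < \<bar>y - 1\<bar> * mix l x"
  using assms by (simp add: mix_rate_def divide_simps)

lemma mix_cross_diff:
  "(\<bar>y - 1\<bar> * mix b x - \<bar>x - 1\<bar> * mix b y) - (\<bar>y - 1\<bar> * mix a x - \<bar>x - 1\<bar> * mix a y)
     = (b - a) * (\<bar>y - 1\<bar> * (x - 1) - \<bar>x - 1\<bar> * (y - 1))"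
  by (simp add: mix_def algebra_simps)

lemma mix_rate_le_propagates:
  assumes "0 < y" "y \<le> x" "0 \<le> a" "a \<le> b" "b \<le> 1" "mix_rate x a \<le> mix_rate y a"
  shows "mix_rate x b \<le> mix_rate y b"
proof -
  have pos: "0 < mix a x" "0 < mix b x" "0 < mix a y" "0 < mix b y"
    using assms by (auto intro: mix_pos)
  have "0 \<le> \<bar>y - 1\<bar> * (x - 1) - \<bar>x - 1\<bar> * (y - 1)"
  proof (cases "y < 1 \<and> 1 \<le> x")
    case True
    then have "\<bar>y - 1\<bar> * (x - 1) - \<bar>x - 1\<bar> * (y - 1) = 2 * ((1 - y) * (x - 1))"
      by (simp add: algebra_simps)
    moreover have "0 \<le> (1 - y) * (x - 1)" using True by simp
    ultimately show ?thesis by linarith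
  next
    case False
    then show ?thesis using \<open>y \<le> x\<close> by (auto simp: abs_if algebra_simps)
  qed
  then have "0 \<le> (b - a) * (\<bar>y - 1\<bar> * (x - 1) - \<bar>x - 1\<bar> * (y - 1))"
    using \<open>a \<le> b\<close> by simp
  moreover have "\<bar>x - 1\<bar> * mix a y \<le> \<bar>y - 1\<bar> * mix a x"
    using assms(6) mix_rate_le_iff[OF pos(1,3)] by simp
  ultimately have "\<bar>x - 1\<bar> * mix b y \<le> \<bar>y - 1\<bar> * mix b x"
    using mix_cross_diff[of y b x a] by linarith
  then show ?thesis using mix_rate_le_iff[OF pos(2,4)] by simp
qed

lemma mix_rate_less_propagates:
  assumes "0 < y" "y < 1" "1 < x" "0 \<le> a" "a < b" "b \<le> 1" "mix_rate x a \<le> mix_rate y a"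
  shows "mix_rate x b < mix_rate y b"
proof -
  have pos: "0 < mix a x" "0 < mix b x" "0 < mix a y" "0 < mix b y"
    using assms by (auto intro: mix_pos)
  have "\<bar>y - 1\<bar> * (x - 1) - \<bar>x - 1\<bar> * (y - 1) = 2 * ((1 - y) * (x - 1))"
    using assms by (simp add: algebra_simps)
  then have "0 < (b - a) * (\<bar>y - 1\<bar> * (x - 1) - \<bar>x - 1\<bar> * (y - 1))"
    using assms by simp
  moreover have "\<bar>x - 1\<bar> * mix a y \<le> \<bar>y - 1\<bar> * mix a x"
    using assms(7) mix_rate_le_iff[OF pos(1,3)] by simp
  ultimately have "\<bar>x - 1\<bar> * mix b y < \<bar>y - 1\<bar> * mix b x"
    using mix_cross_diff[of y b x a] by linarith
  then show ?thesis using mix_rate_less_iff[OF pos(2,4)] by simp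
qed

lemma mix_slope_gap_le_initial:
  assumes "0 < y" "y \<le> x" "0 \<le> s" "s \<le> 1" "mix_rate y s < mix_rate x s"
  shows "(x - 1) / mix s x - (y - 1) / mix s y \<le> x - y"
proof -
  have "\<not> mix_rate x 0 \<le> mix_rate y 0"
    using mix_rate_le_propagates[OF \<open>0 < y\<close> \<open>y \<le> x\<close>, of 0 s] assms(3-5) by auto
  then have "(y - 1) / mix 0 y - (x - 1) / mix 0 x \<le> (y - 1) / mix s y - (x - 1) / mix s x"
    using mix_slope_gap_mono[of y x 0 s] assms by auto
  then show ?thesis by (simp add: mix_def)
qed

lemma ln_mix_has_derivative:
  assumes "0 < x" "0 \<le> t" "t \<le> 1"
  shows "((\<lambda>l. ln (mix l x)) has_real_derivative (x - 1) / mix t x) (at t)"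
proof -
  have "0 < mix t x" using assms by (rule mix_pos)
  then show ?thesis unfolding mix_def
    by (auto intro!: derivative_eq_intros)
qed

lemma ln_mix_gap_mvt:
  assumes "0 < x" "0 < y" "0 < l" "l < 1"
  defines "J \<equiv> \<lambda>l. ln (mix l x) - ln (mix l y) - l * (ln x - ln y)"
    and "J' \<equiv> \<lambda>l. (x - 1) / mix l x - (y - 1) / mix l y - (ln x - ln y)"
  obtains s t where "0 < s" "s < l" "J l = l * J' s" "l < t" "t < 1" "J l = - ((1 - l) * J' t)"
proof (rule mvt_vanishing_ends[of J J' l])
  fix t :: real assume "0 \<le> t" "t \<le> 1"
  then show "(J has_real_derivative J' t) (at t)" unfolding J_def J'_def
    using assms(1,2) by (intro DERIV_diff ln_mix_has_derivative) (auto intro!: derivative_eq_intros)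
qed (use that assms in \<open>auto simp: J_def mix_def\<close>)

text \<open>For \<open>J l = ln (mix l x) - ln (mix l y) - l (ln x - ln y)\<close> the mean value theorem gives
  \<open>J l = l J'(s) = -(1 - l) J'(t)\<close> with \<open>s < l < t\<close>. The slope \<open>J'\<close> decreases while
  \<open>mix_rate y < mix_rate x\<close> and increases afterwards, and the order of the two rates switches at
  most once; so either \<open>J'(s) \<le> J'(t)\<close> or \<open>J'(s) \<le> J'(0) \<le> 0\<close>.\<close>

lemma ln_mix_gap_le:
  assumes "0 < y" "y \<le> x" "x - y \<le> ln x - ln y" "0 < l" "l < 1"
  shows "ln (mix l x) - ln (mix l y) \<le> l * (ln x - ln y)"
proof -
  define J' where "J' l = (x - 1) / mix l x - (y - 1) / mix l y - (ln x - ln y)" for l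
  have "0 < x" using assms by simp
  obtain s t where st: "0 < s" "s < l" "l < t" "t < 1"
    and J_s: "ln (mix l x) - ln (mix l y) - l * (ln x - ln y) = l * J' s"
    and J_t: "ln (mix l x) - ln (mix l y) - l * (ln x - ln y) = - ((1 - l) * J' t)"
    using ln_mix_gap_mvt[OF \<open>0 < x\<close> \<open>0 < y\<close> \<open>0 < l\<close> \<open>l < 1\<close>] unfolding J'_def by metis
  show ?thesis
  proof (cases "mix_rate x s \<le> mix_rate y s")
    case True
    then have "mix_rate x t \<le> mix_rate y t"
      using mix_rate_le_propagates[OF \<open>0 < y\<close> \<open>y \<le> x\<close>, of s t] st by simp
    then have "J' s \<le> J' t"
      using mix_slope_gap_mono[OF \<open>0 < x\<close> \<open>0 < y\<close>, of s t] True st by (simp add: J'_def)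
    then show ?thesis
      using nonpos_of_two_slopes[OF J_s J_t \<open>0 < l\<close> \<open>l < 1\<close>] by simp
  next
    case False
    then have "J' s \<le> 0"
      using mix_slope_gap_le_initial[OF \<open>0 < y\<close> \<open>y \<le> x\<close>, of s] st assms(3) by (simp add: J'_def)
    then have "l * J' s \<le> 0" using \<open>0 < l\<close> by (simp add: mult_nonneg_nonpos)
    then show ?thesis using J_s by linarith
  qed
qed

lemma ln_mix_gap_less:
  assumes "0 < y" "y < 1" "1 < x" "x - y < ln x - ln y" "0 < l" "l < 1"
  shows "ln (mix l x) - ln (mix l y) < l * (ln x - ln y)"
proof -
  define J' where "J' l = (x - 1) / mix l x - (y - 1) / mix l y - (ln x - ln y)" for l
  have "0 < x" "x \<noteq> 1" "y \<le> x" using assms by simp_all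
  obtain s t where st: "0 < s" "s < l" "l < t" "t < 1"
    and J_s: "ln (mix l x) - ln (mix l y) - l * (ln x - ln y) = l * J' s"
    and J_t: "ln (mix l x) - ln (mix l y) - l * (ln x - ln y) = - ((1 - l) * J' t)"
    using ln_mix_gap_mvt[OF \<open>0 < x\<close> \<open>0 < y\<close> \<open>0 < l\<close> \<open>l < 1\<close>] unfolding J'_def by metis
  show ?thesis
  proof (cases "mix_rate x s \<le> mix_rate y s")
    case True
    then have "mix_rate x t < mix_rate y t"
      using mix_rate_less_propagates[OF \<open>0 < y\<close> \<open>y < 1\<close> \<open>1 < x\<close>, of s t] st by simp
    then have "J' s < J' t"
      using mix_slope_gap_strict_mono[OF \<open>0 < x\<close> \<open>0 < y\<close> \<open>x \<noteq> 1\<close>, of s t] True st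
      by (simp add: J'_def)
    then show ?thesis
      using neg_of_two_slopes[OF J_s J_t \<open>0 < l\<close> \<open>l < 1\<close>] by simp
  next
    case False
    then have "J' s < 0"
      using mix_slope_gap_le_initial[OF \<open>0 < y\<close> \<open>y \<le> x\<close>, of s] st assms(4) by (simp add: J'_def)
    then have "l * J' s < 0" using \<open>0 < l\<close> by (simp add: mult_pos_neg)
    then show ?thesis using J_s by linarith
  qed
qed

text \<open>The hypothesis \<open>\<bar>x - y\<bar> \<le> \<bar>ln x - ln y\<bar>\<close> says that the logarithmic mean of \<open>x\<close> and
  \<open>y\<close> is at most 1.\<close>

lemma log_gap_mix_le:
  assumes "0 < x" "0 < y" "\<bar>x - y\<bar> \<le> \<bar>ln x - ln y\<bar>" "0 \<le> l" "l \<le> 1"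
  shows "log_gap (mix l x) (mix l y) \<le> l\<^sup>2 * log_gap x y"
proof -
  consider "l = 0" | "l = 1" | "0 < l" "l < 1" using assms(4,5) by linarith
  then show ?thesis
  proof cases
    case 3
    show ?thesis using assms(1-3)
    proof (induction x y rule: linorder_wlog)
      case (le y x)
      then have "x - y \<le> ln x - ln y" by simp
      then have "(x - y) * (ln (mix l x) - ln (mix l y)) \<le> (x - y) * (l * (ln x - ln y))"
        using ln_mix_gap_le[of y x l] le 3 by (intro mult_left_mono) auto
      then have "l * ((x - y) * (ln (mix l x) - ln (mix l y))) \<le> l * ((x - y) * (l * (ln x - ln y)))"
        using \<open>0 < l\<close> by simp
      then show ?case
        by (subst (1 2) log_gap_commute) (simp add: log_gap_def mix_diff power2_eq_square ac_simps)
    qed (simp add: log_gap_commute abs_minus_commute)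
  qed (simp_all add: log_gap_def mix_def)
qed

lemma log_gap_mix_less:
  assumes "0 < y" "y < 1" "1 < x" "x - y < ln x - ln y" "0 < l" "l < 1"
  shows "log_gap (mix l x) (mix l y) < l\<^sup>2 * log_gap x y"
proof -
  have "(x - y) * (ln (mix l x) - ln (mix l y)) < (x - y) * (l * (ln x - ln y))"
    using ln_mix_gap_less[OF assms] assms(2,3) by (intro mult_strict_left_mono) auto
  then have "l * ((x - y) * (ln (mix l x) - ln (mix l y))) < l * ((x - y) * (l * (ln x - ln y)))"
    using \<open>0 < l\<close> by simp
  then show ?thesis by (simp add: log_gap_def mix_diff power2_eq_square ac_simps)
qed

section \<open>Log-odds of a binary symmetric channel\<close>

lemma ln_odds_plus_decreasing:
  fixes a b :: real
  assumes "0 < a" "a < b" "b \<le> 1/2"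
  shows "ln (1 - b) - ln b + 4 * b < ln (1 - a) - ln a + 4 * a"
proof (rule DERIV_neg_imp_decreasing_open[OF \<open>a < b\<close>])
  fix x :: real assume "a < x" "x < b"
  then have x: "0 < x" "x < 1/2" using assms by auto
  have "0 < (x - 1/2)\<^sup>2" using x by simp
  then have "x * (1 - x) < 1/4" by (simp add: power2_eq_square algebra_simps)
  then have "4 < 1 / (1 - x) + 1 / x"
    using x by (simp add: field_simps)
  moreover have "((\<lambda>x. ln (1 - x) - ln x + 4 * x) has_real_derivative - (1 / (1 - x)) - 1 / x + 4) (at x)"
    using x by (auto intro!: derivative_eq_intros simp: field_simps)
  ultimately show "\<exists>y. ((\<lambda>x. ln (1 - x) - ln x + 4 * x) has_real_derivative y) (at x) \<and> y < 0"
    by (intro exI conjI) auto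
next
  show "continuous_on {a..b} (\<lambda>x. ln (1 - x) - ln x + 4 * x)"
    using assms by (intro continuous_intros) auto
qed

lemma ln_odds_lower_bound:
  fixes d :: real
  assumes "0 < d" "d \<le> 1/2"
  shows "2 * (1 - 2 * d) \<le> ln (1 - d) - ln d"
    and "d < 1/2 \<Longrightarrow> 2 * (1 - 2 * d) < ln (1 - d) - ln d"
proof -
  have half: "ln (1 - 1/2) - ln (1/2) + 4 * (1/2 :: real) = 2" by simp
  show "d < 1/2 \<Longrightarrow> 2 * (1 - 2 * d) < ln (1 - d) - ln d"
    using ln_odds_plus_decreasing[of d "1/2"] assms(1) unfolding half by simp
  then show "2 * (1 - 2 * d) \<le> ln (1 - d) - ln d"
  proof (cases "d < 1/2")
    case False
    then have "d = 1/2" using assms(2) by simp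
    then show ?thesis by (simp add: \<open>d = 1/2\<close>)
  qed simp
qed

lemma ln_odds_diff_bound:
  fixes a b :: real
  assumes "0 < a" "a \<le> 1/2" "0 < b" "b \<le> 1/2"
  shows "4 * \<bar>a - b\<bar> \<le> \<bar>(ln (1 - a) - ln a) - (ln (1 - b) - ln b)\<bar>"
  using assms
proof (induction a b rule: linorder_wlog)
  case (le a b)
  then show ?case
    using ln_odds_plus_decreasing[of a b] by (cases "a = b") auto
qed (simp add: abs_minus_commute)

text \<open>Output density of \<open>BSC d1 \<times> BSC d2\<close> fed with two copies of \<open>y\<close>, relative to the uniform
  distribution on the four outputs.\<close>

definition copy_density :: "real \<Rightarrow> real \<Rightarrow> bool \<Rightarrow> bool \<times> bool \<Rightarrow> real" where
  "copy_density d1 d2 y z = 4 * BSC d1 y (fst z) * BSC d2 y (snd z)"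

lemma copy_density_pos:
  assumes "0 < d1" "d1 < 1" "0 < d2" "d2 < 1"
  shows "0 < copy_density d1 d2 y z"
  using assms by (simp add: copy_density_def BSC_def)

lemma copy_density_nonneg:
  assumes "0 \<le> d1" "d1 \<le> 1" "0 \<le> d2" "d2 \<le> 1"
  shows "0 \<le> copy_density d1 d2 y z"
  using assms by (simp add: copy_density_def BSC_def)

lemma mix_copy_density_pos:
  assumes "0 \<le> lam" "lam \<le> 1" "0 \<le> d1" "d1 \<le> 1/2" "0 \<le> d2" "d2 \<le> 1/2"
    and "lam < 1 \<or> 0 < d1 \<and> 0 < d2"
  shows "0 < mix lam (copy_density d1 d2 y z)"
  using assms(7)
proof
  assume "lam < 1"
  then show ?thesis using assms by (intro mix_pos_of_less_one copy_density_nonneg) auto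
next
  assume "0 < d1 \<and> 0 < d2"
  then show ?thesis using assms by (intro mix_pos copy_density_pos) auto
qed

lemma copy_density_differences:
  assumes "0 < d1" "d1 < 1" "0 < d2" "d2 < 1"
  shows "copy_density d1 d2 True (u, v) - copy_density d1 d2 False (u, v)
           = 2 * ((if u then 1 else -1) * (1 - 2 * d1) + (if v then 1 else -1) * (1 - 2 * d2))"
    and "ln (copy_density d1 d2 True (u, v)) - ln (copy_density d1 d2 False (u, v))
           = (if u then 1 else -1) * (ln (1 - d1) - ln d1) + (if v then 1 else -1) * (ln (1 - d2) - ln d2)"
proof -
  show "copy_density d1 d2 True (u, v) - copy_density d1 d2 False (u, v)
           = 2 * ((if u then 1 else -1) * (1 - 2 * d1) + (if v then 1 else -1) * (1 - 2 * d2))"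
    by (cases u; cases v) (simp_all add: copy_density_def BSC_def algebra_simps)
  have pos: "0 < BSC d1 y u" "0 < BSC d2 y v" for y
    using assms by (simp_all add: BSC_def)
  have "ln (copy_density d1 d2 y (u, v)) = ln 4 + ln (BSC d1 y u) + ln (BSC d2 y v)" for y
    unfolding copy_density_def fst_conv snd_conv
    using ln_mult_pos[OF mult_pos_pos[OF _ pos(1)] pos(2), of 4 y] ln_mult_pos[OF _ pos(1), of 4 y] by simp
  then show "ln (copy_density d1 d2 True (u, v)) - ln (copy_density d1 d2 False (u, v))
           = (if u then 1 else -1) * (ln (1 - d1) - ln d1) + (if v then 1 else -1) * (ln (1 - d2) - ln d2)"
    by (cases u; cases v) (simp_all add: BSC_def)
qed

lemma copy_density_log_gap_cond:
  assumes "0 < d1" "d1 \<le> 1/2" "0 < d2" "d2 \<le> 1/2"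
  shows "\<bar>copy_density d1 d2 True z - copy_density d1 d2 False z\<bar>
           \<le> \<bar>ln (copy_density d1 d2 True z) - ln (copy_density d1 d2 False z)\<bar>"
proof -
  define L1 L2 where "L1 = ln (1 - d1) - ln d1" and "L2 = ln (1 - d2) - ln d2"
  obtain u v where z: "z = (u, v)" by fastforce
  have "2 * (1 - 2 * d1) \<le> L1" "2 * (1 - 2 * d2) \<le> L2" "4 * \<bar>d1 - d2\<bar> \<le> \<bar>L1 - L2\<bar>"
    unfolding L1_def L2_def using assms ln_odds_lower_bound(1) ln_odds_diff_bound by auto
  moreover have "\<bar>L2 - L1\<bar> = \<bar>L1 - L2\<bar>" by (rule abs_minus_commute)
  moreover have "d1 - d2 \<le> \<bar>d1 - d2\<bar>" "d2 - d1 \<le> \<bar>d1 - d2\<bar>" by linarith+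
  moreover have "d1 < 1" "d2 < 1" using assms by auto
  ultimately show ?thesis
    unfolding z copy_density_differences[OF \<open>0 < d1\<close> \<open>d1 < 1\<close> \<open>0 < d2\<close> \<open>d2 < 1\<close>]
      L1_def[symmetric] L2_def[symmetric]
    using assms by (cases u; cases v) (auto simp: abs_le_iff)
qed

section \<open>SKL information of the composed channel\<close>

lemma skl_terms_at_midpoint:
  fixes a b :: real
  assumes "0 < a" "0 < b"
  shows "(a - (a + b) / 2) * ln (a / ((a + b) / 2)) + (b - (a + b) / 2) * ln (b / ((a + b) / 2))
       = log_gap a b / 2"
proof -
  define m where "m = (a + b) / 2"
  have "0 < m" using assms by (simp add: m_def)
  then have ln_a: "ln (a / m) = ln a - ln m" and ln_b: "ln (b / m) = ln b - ln m"
    using assms by (simp_all add: ln_divide_pos)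
  have a: "a - m = (a - b) / 2" and b: "b - m = - ((a - b) / 2)" by (simp_all add: m_def field_simps)
  show ?thesis unfolding m_def[symmetric] ln_a ln_b a b by (simp add: log_gap_def field_simps)
qed

lemma C_SKL_eq_sum_log_gap:
  fixes P :: "bool \<Rightarrow> 'b::finite \<Rightarrow> real"
  assumes pos: "\<And>x y. 0 < P x y"
  shows "C_SKL P = ereal ((\<Sum>y\<in>UNIV. log_gap (P True y) (P False y)) / 4)"
proof -
  define m where "m y = (1/2) * (\<Sum>x'\<in>UNIV. P x' y / 2)" for y
  have m: "m y = (P True y / 2 + P False y / 2) / 2" for y by (simp add: m_def UNIV_bool)
  have m_pos: "0 < m y" for y unfolding m using pos by (simp add: add_pos_pos)
  have "m y \<noteq> 0" "P x y \<noteq> 0" for x y using m_pos[of y] pos[of x y] by auto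
  then have "C_SKL P = (\<Sum>x\<in>UNIV. \<Sum>y\<in>UNIV. ereal ((P x y / 2 - m y) * ln (P x y / 2 / m y)))"
    unfolding C_SKL_def m_def[symmetric] using pos by (intro sum.cong refl) (simp add: skl_term_def)
  also have "\<dots> = ereal (\<Sum>y\<in>UNIV. \<Sum>x\<in>UNIV. (P x y / 2 - m y) * ln (P x y / 2 / m y))"
    by (subst sum.swap) simp
  also have "\<dots> = ereal (\<Sum>y\<in>UNIV. log_gap (P True y / 2) (P False y / 2) / 2)"
  proof -
    have pair: "(\<Sum>x\<in>UNIV. (P x y / 2 - m y) * ln (P x y / 2 / m y)) = log_gap (P True y / 2) (P False y / 2) / 2"
      for y using skl_terms_at_midpoint[of "P True y / 2" "P False y / 2"] pos
      unfolding m by (simp add: UNIV_bool add.commute)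
    show ?thesis unfolding pair ..
  qed
  also have "\<dots> = ereal ((\<Sum>y\<in>UNIV. log_gap (P True y) (P False y)) / 4)"
  proof -
    have half: "log_gap (P True y / 2) (P False y / 2) = log_gap (P True y) (P False y) / 2" for y
      using log_gap_scale[of "1/2" "P True y" "P False y"] pos by simp
    show ?thesis unfolding half by (simp add: sum_divide_distrib)
  qed
  finally show ?thesis .
qed

lemma C_SKL_BSC:
  assumes "0 < d" "d < 1"
  shows "C_SKL (BSC d) = ereal ((1 - 2 * d) / 2 * (ln (1 - d) - ln d))"
  using assms by (subst C_SKL_eq_sum_log_gap) (auto simp: BSC_def UNIV_bool log_gap_def field_simps)

lemma C_SKL_BSC_0: "C_SKL (BSC 0) = \<infinity>"
  by (simp add: C_SKL_def BSC_def skl_term_def UNIV_bool)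

lemma chan_comp_B3_eq_mix:
  "chan_comp (chan_prod (BSC d1) (BSC d2)) (B3 lam) y z = mix lam (copy_density d1 d2 y z) / 4"
  by (cases y; cases z)
    (auto simp: chan_comp_def chan_prod_def B3_def BSC_def copy_density_def mix_def sum_bool_pair field_simps)

lemma C_SKL_chan_comp_B3:
  assumes pos: "\<And>y z. 0 < mix lam (copy_density d1 d2 y z)"
  shows "C_SKL (chan_comp (chan_prod (BSC d1) (BSC d2)) (B3 lam))
    = ereal ((\<Sum>z\<in>UNIV. log_gap (mix lam (copy_density d1 d2 True z)) (mix lam (copy_density d1 d2 False z))) / 16)"
proof -
  have quarter: "log_gap (mix lam (copy_density d1 d2 True z) / 4) (mix lam (copy_density d1 d2 False z) / 4)
      = log_gap (mix lam (copy_density d1 d2 True z)) (mix lam (copy_density d1 d2 False z)) / 4" for z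
    using log_gap_scale[of "1/4"] pos by simp
  show ?thesis
    unfolding chan_comp_B3_eq_mix[abs_def] using pos
    by (subst C_SKL_eq_sum_log_gap) (simp_all add: quarter sum_divide_distrib)
qed

lemma sum_log_gap_copy_density:
  assumes "0 < d1" "d1 < 1" "0 < d2" "d2 < 1"
  shows "(\<Sum>z\<in>UNIV. log_gap (copy_density d1 d2 True z) (copy_density d1 d2 False z)) / 16
    = (1 - 2 * d1) / 2 * (ln (1 - d1) - ln d1) + (1 - 2 * d2) / 2 * (ln (1 - d2) - ln d2)"
  unfolding sum_bool_pair log_gap_def copy_density_differences[OF assms]
  by (simp add: field_simps)

lemma sum_log_gap_mix_copy_density_le:
  assumes "0 \<le> lam" "lam \<le> 1" "0 < d1" "d1 \<le> 1/2" "0 < d2" "d2 \<le> 1/2"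
  shows "(\<Sum>z\<in>UNIV. log_gap (mix lam (copy_density d1 d2 True z)) (mix lam (copy_density d1 d2 False z)))
    \<le> lam\<^sup>2 * (\<Sum>z\<in>UNIV. log_gap (copy_density d1 d2 True z) (copy_density d1 d2 False z))"
  unfolding sum_distrib_left using assms
  by (intro sum_mono log_gap_mix_le copy_density_pos copy_density_log_gap_cond) auto

lemma copy_density_strict_cond:
  assumes "0 < d1" "d1 \<le> 1/2" "0 < d2" "d2 \<le> 1/2" "min d1 d2 < 1/2"
  defines "x \<equiv> copy_density d1 d2 True (True, True)" and "y \<equiv> copy_density d1 d2 False (True, True)"
  shows "y < 1" "1 < x" "x - y < ln x - ln y"
proof -
  consider "d1 < 1/2" | "d2 < 1/2" using assms(5) by linarith
  then have "d1 * d2 < 1/4 \<and> 1/4 < (1 - d1) * (1 - d2)"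
  proof cases
    case 1
    have "d1 * d2 \<le> d1 * (1/2)" using assms(1-4) by (intro mult_left_mono) auto
    also have "\<dots> < 1/4" using 1 by simp
    finally have "d1 * d2 < 1/4" .
    have "1/4 < (1 - d1) * (1/2)" using 1 by simp
    also have "\<dots> \<le> (1 - d1) * (1 - d2)" using assms(1-4) by (intro mult_left_mono) auto
    finally show ?thesis using \<open>d1 * d2 < 1/4\<close> by simp
  next
    case 2
    have "d1 * d2 \<le> (1/2) * d2" using assms(1-4) by (intro mult_right_mono) auto
    also have "\<dots> < 1/4" using 2 by simp
    finally have "d1 * d2 < 1/4" .
    have "1/4 < (1/2) * (1 - d2)" using 2 by simp
    also have "\<dots> \<le> (1 - d1) * (1 - d2)" using assms(1-4) by (intro mult_right_mono) auto
    finally show ?thesis using \<open>d1 * d2 < 1/4\<close> by simp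
  qed
  then show "y < 1" "1 < x" unfolding x_def y_def copy_density_def BSC_def by (simp_all add: algebra_simps)
  have "2 * (1 - 2 * d1) + 2 * (1 - 2 * d2) < (ln (1 - d1) - ln d1) + (ln (1 - d2) - ln d2)"
    using ln_odds_lower_bound[of d1] ln_odds_lower_bound[of d2] assms(1-5) by (auto simp: min_def split: if_splits)
  moreover have "d1 < 1" "d2 < 1" using assms by auto
  ultimately show "x - y < ln x - ln y"
    unfolding x_def y_def copy_density_differences[OF \<open>0 < d1\<close> \<open>d1 < 1\<close> \<open>0 < d2\<close> \<open>d2 < 1\<close>]
    by simp
qed

lemma sum_log_gap_mix_copy_density_less:
  assumes "0 < lam" "lam < 1" "0 < d1" "d1 \<le> 1/2" "0 < d2" "d2 \<le> 1/2" "min d1 d2 < 1/2"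
  shows "(\<Sum>z\<in>UNIV. log_gap (mix lam (copy_density d1 d2 True z)) (mix lam (copy_density d1 d2 False z)))
    < lam\<^sup>2 * (\<Sum>z\<in>UNIV. log_gap (copy_density d1 d2 True z) (copy_density d1 d2 False z))"
  unfolding sum_distrib_left
proof (rule sum_strict_mono_ex1)
  show "\<forall>z\<in>UNIV. log_gap (mix lam (copy_density d1 d2 True z)) (mix lam (copy_density d1 d2 False z))
      \<le> lam\<^sup>2 * log_gap (copy_density d1 d2 True z) (copy_density d1 d2 False z)"
    using assms by (intro ballI log_gap_mix_le copy_density_pos copy_density_log_gap_cond) auto
  have "0 < copy_density d1 d2 False (True, True)"
    using assms by (intro copy_density_pos) auto
  then show "\<exists>z\<in>UNIV. log_gap (mix lam (copy_density d1 d2 True z)) (mix lam (copy_density d1 d2 False z))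
      < lam\<^sup>2 * log_gap (copy_density d1 d2 True z) (copy_density d1 d2 False z)"
    using assms copy_density_strict_cond[OF assms(3-7)]
    by (intro bexI[of _ "(True, True)"] log_gap_mix_less) auto
qed simp

theorem mainTheorem9:
  fixes lam \<Delta>1 \<Delta>2 :: real
  assumes "0 \<le> lam" "lam \<le> 1"
    and "0 \<le> \<Delta>1" "\<Delta>1 \<le> 1/2" "0 \<le> \<Delta>2" "\<Delta>2 \<le> 1/2"
  shows "C_SKL (chan_comp (chan_prod (BSC \<Delta>1) (BSC \<Delta>2)) (B3 lam))
           \<le> ereal (lam ^ 2) * (C_SKL (BSC \<Delta>1) + C_SKL (BSC \<Delta>2)) \<and>
         (0 < lam \<and> lam < 1 \<and> min \<Delta>1 \<Delta>2 < 1/2 \<longrightarrow>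
         C_SKL (chan_comp (chan_prod (BSC \<Delta>1) (BSC \<Delta>2)) (B3 lam))
           < ereal (lam ^ 2) * (C_SKL (BSC \<Delta>1) + C_SKL (BSC \<Delta>2)))"
proof -
  define S where "S l = (\<Sum>z\<in>UNIV. log_gap (mix l (copy_density \<Delta>1 \<Delta>2 True z))
                                          (mix l (copy_density \<Delta>1 \<Delta>2 False z))) / 16" for l
  have lhs: "C_SKL (chan_comp (chan_prod (BSC \<Delta>1) (BSC \<Delta>2)) (B3 lam)) = ereal (S lam)"
    if "lam < 1 \<or> 0 < \<Delta>1 \<and> 0 < \<Delta>2"
    unfolding S_def using assms that by (intro C_SKL_chan_comp_B3 mix_copy_density_pos)
  consider (trivial) "lam = 0" | (noiseless) "0 < lam" "\<Delta>1 = 0 \<or> \<Delta>2 = 0"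
    | (noisy) "0 < lam" "0 < \<Delta>1" "0 < \<Delta>2"
    using assms by linarith
  then show ?thesis
  proof cases
    case trivial
    then show ?thesis using lhs by (simp add: S_def mix_def log_gap_def zero_ereal_def[symmetric])
  next
    case noiseless
    then have "ereal (lam ^ 2) * (C_SKL (BSC \<Delta>1) + C_SKL (BSC \<Delta>2)) = \<infinity>"
      using assms C_SKL_BSC C_SKL_BSC_0 by (cases "\<Delta>1 = 0"; cases "\<Delta>2 = 0") auto
    then show ?thesis using lhs by auto
  next
    case noisy
    then have "ereal (lam ^ 2) * (C_SKL (BSC \<Delta>1) + C_SKL (BSC \<Delta>2)) = ereal (lam\<^sup>2 * S 1)"
      using assms by (simp add: S_def mix_def C_SKL_BSC sum_log_gap_copy_density)
    then show ?thesis
      using lhs noisy assms sum_log_gap_mix_copy_density_le[of lam \<Delta>1 \<Delta>2]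
        sum_log_gap_mix_copy_density_less[of lam \<Delta>1 \<Delta>2]
      by (simp add: S_def mix_def)
  qed
qed

end
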